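(* Let $K=2$ and let $n_1,n_2$ be nonnegative integers; put $s \coloneqq \min(n_1,n_2)$ and $l \coloneqq \max(n_1,n_2)$. If $l > s > 0$, then \[ h(s+1,\,l) \;\geq\; h(s,\,l+1). \]
   Context: Fix an integer $K\ge 2$. An initial assortment is a vector $\vec n=(n_1,\dots,n_K)$ of nonnegative integers ($n_i$ is the initial stock of goodie type $i$). The following random process is run: the stocks start at $\vec n^{(0)}=\vec n$; at each step $t=1,2,\dots$, as long as at least two coordinates of the current stock vector $\vec n^{(t-1)}$ are nonzero, an index $i$ is chosen uniformly at random (independently of the past) among the indices with $n_i^{(t-1)}>0$, and $\vec n^{(t)}=\vec n^{(t-1)}-\vec e_i$, where $\vec e_i$ is the $i$-th standard unit vector. The process stops at the first time $T$ at which at most one coordinate of $\vec n^{(T)}$ is nonzero. Define $h(\vec n)=\mathbb{E}[T]$ (the expected number of "happy" attendees). Equivalently, with $\operatorname{support}(\vec n)=\{i : n_i\neq 0\}$: $h(\vec n)=0$ if $|\operatorname{support}(\vec n)|\le 1$, and otherwise $h(\vec n)=1+\frac{1}{|\operatorname{support}(\vec n)|}\sum_{i\in\operatorname{support}(\vec n)} h(\vec n-\vec e_i)$. *)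

theory Defs
  imports Main "HOL.Real"
begin

text \<open>An assortment with K types is a list of naturals of length K (index i < K).\<close>

definition supp :: "nat list \<Rightarrow> nat set" where
  "supp ns = {i. i < length ns \<and> ns ! i \<noteq> 0}"

lemma finite_supp[simp]: "finite (supp ns)"
  unfolding supp_def by simp

lemma sum_list_dec:
  assumes "i \<in> supp ns"
  shows "sum_list (ns[i := ns ! i - 1]) < sum_list ns"
proof -
  from assms have i: "i < length ns" "ns ! i \<noteq> 0" by (auto simp: supp_def)
  have le: "ns ! i \<le> sum_list ns" using i(1) by (rule elem_le_sum_list)
  have "sum_list (ns[i := ns ! i - 1]) = sum_list ns - 1"
    using i le by (simp add: sum_list_update)
  with i le show ?thesis by simp
qed

function h :: "nat list \<Rightarrow> real" where
  "h ns = (if card (supp ns) \<le> 1 then 0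
           else 1 + (\<Sum>i\<in>supp ns. h (ns[i := ns ! i - 1])) / real (card (supp ns)))"
  by pat_completeness auto
termination
  by (relation "measure sum_list") (auto simp del: One_nat_def intro: sum_list_dec)

declare h.simps[simp del]

end

theory Submission
  imports Defs
begin

(* For two goodie types h obeys h(a+1, b+1) = 1 + (h(a, b+1) + h(a+1, b)) / 2 and vanishes
   on the axes. Shifting one unit from the smaller pile to the larger one cannot increase h:
   by induction along this recursion, the two recursions for h(a, b+1) and h(a+1, b) are
   compared term by term, each comparison being an instance of the induction hypothesis,
   except at the diagonal, where the symmetry h(a, b) = h(b, a) closes the gap. *)

lemma h_nonneg: "0 \<le> h ns"
proof (induction ns rule: h.induct)
  case (1 ns)
  then show ?case
    by (subst h.simps) (auto intro!: add_nonneg_nonneg sum_nonneg divide_nonneg_nonneg)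
qed

lemma supp_pair: "supp [a, b] = (if a = 0 then {} else {0}) \<union> (if b = 0 then {} else {1})"
  by (auto simp: supp_def nth_Cons' less_Suc_eq)

lemma h_pair_zero_left [simp]: "h [0, b] = 0"
  by (subst h.simps) (simp add: supp_pair)

lemma h_pair_zero_right [simp]: "h [a, 0] = 0"
  by (subst h.simps) (simp add: supp_pair)

lemma h_pair_Suc_Suc [simp]:
  "h [Suc a, Suc b] = 1 + (h [a, Suc b] + h [Suc a, b]) / 2"
  by (subst h.simps) (simp add: supp_pair)

lemma pair_induct [case_names zero_left zero_right Suc_Suc]:
  assumes "\<And>b. P 0 b"
    and "\<And>a. P a 0"
    and "\<And>a b. P a (Suc b) \<Longrightarrow> P (Suc a) b \<Longrightarrow> P (Suc a) (Suc b)"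
  shows "P a b"
proof (induction a arbitrary: b)
  case 0
  show ?case by (rule assms(1))
next
  case (Suc a)
  show ?case
    by (induction b) (use Suc.IH assms(2,3) in auto)
qed

lemma h_pair_commute: "h [a, b] = h [b, a]"
  by (induction a b rule: pair_induct) simp_all

lemma h_pair_shift_to_larger:
  assumes "a < b"
  shows "h [a, Suc b] \<le> h [Suc a, b]"
  using assms
proof (induction a b rule: pair_induct)
  case (zero_left b)
  show ?case by (simp add: h_nonneg)
next
  case (zero_right a)
  then show ?case by simp
next
  case (Suc_Suc a b)
  have left: "h [a, Suc (Suc b)] \<le> h [Suc a, Suc b]"
    using Suc_Suc.IH(1) Suc_Suc.prems by simp
  have right: "h [Suc a, Suc b] \<le> h [Suc (Suc a), b]"
  proof (cases "Suc a < b")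
    case True
    then show ?thesis using Suc_Suc.IH(2) by simp
  next
    case False
    with Suc_Suc.prems have "b = Suc a" by simp
    then show ?thesis by (simp add: h_pair_commute)
  qed
  show ?case using left right by simp
qed

theorem lemma1:
  fixes n1 n2 :: nat
  defines "s \<equiv> min n1 n2" and "l \<equiv> max n1 n2"
  assumes "l > s" and "s > 0"
  shows "h [s + 1, l] \<ge> h [s, l + 1]"
  using h_pair_shift_to_larger[OF \<open>l > s\<close>] by simp

end
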